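(* There is a randomized algorithm which, given a set $P$ of $n$ elements and access to a query oracle for a poset $(P,\succ)$ of width at most $w$, finds the set of minimal elements of $(P,\succ)$, and whose expected number of oracle queries is at most $$\frac{w+1}{2}\,n+\frac{w^2-w}{2}\,(\log n-\log w).$$
   Context: A poset $(P,\succ)$ consists of a set $P$ and an irreflexive, transitive relation $\succ$. Elements $a,b$ are incomparable if neither $a\succ b$ nor $b\succ a$; the width is the maximum size of a set of mutually incomparable elements. An element $a$ is minimal if there is no $b$ with $a\succ b$. A query oracle answers a query on $(x,y)$ by reporting whether $x\succ y$, $y\succ x$, or they are incomparable. Logarithms are base $2$. *)

theory Defs
  imports "HOL-Probability.Probability"
begin

datatype answer = Gt | Lt | Inc

definition query_answer :: "('a \<Rightarrow> 'a \<Rightarrow> bool) \<Rightarrow> 'a \<Rightarrow> 'a \<Rightarrow> answer" where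
  "query_answer gt x y = (if gt x y then Gt else if gt y x then Lt else Inc)"

(* Deterministic query algorithms (decision trees): either stop with an output
  set, or query a pair and continue depending on the answer. *)
datatype 'a qtree = Output "'a set" | Query 'a 'a "answer \<Rightarrow> 'a qtree"

primrec qresult :: "('a \<Rightarrow> 'a \<Rightarrow> bool) \<Rightarrow> 'a qtree \<Rightarrow> 'a set" where
  "qresult gt (Output S) = S"
| "qresult gt (Query x y k) = qresult gt (k (query_answer gt x y))"

primrec qcount :: "('a \<Rightarrow> 'a \<Rightarrow> bool) \<Rightarrow> 'a qtree \<Rightarrow> nat" where
  "qcount gt (Output S) = 0"
| "qcount gt (Query x y k) = Suc (qcount gt (k (query_answer gt x y)))"

type_synonym 'a rand_qalg = "'a qtree pmf"

definition poset_on :: "'a set \<Rightarrow> ('a \<Rightarrow> 'a \<Rightarrow> bool) \<Rightarrow> bool" where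
  "poset_on P gt \<longleftrightarrow> (\<forall>x\<in>P. \<not> gt x x) \<and>
     (\<forall>x\<in>P. \<forall>y\<in>P. \<forall>z\<in>P. gt x y \<longrightarrow> gt y z \<longrightarrow> gt x z)"

definition incomparable :: "('a \<Rightarrow> 'a \<Rightarrow> bool) \<Rightarrow> 'a \<Rightarrow> 'a \<Rightarrow> bool" where
  "incomparable gt a b \<longleftrightarrow> \<not> gt a b \<and> \<not> gt b a"

definition antichain_in :: "'a set \<Rightarrow> ('a \<Rightarrow> 'a \<Rightarrow> bool) \<Rightarrow> 'a set \<Rightarrow> bool" where
  "antichain_in P gt A \<longleftrightarrow> A \<subseteq> P \<and>
     (\<forall>a\<in>A. \<forall>b\<in>A. a \<noteq> b \<longrightarrow> incomparable gt a b)"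

definition width_le :: "'a set \<Rightarrow> ('a \<Rightarrow> 'a \<Rightarrow> bool) \<Rightarrow> nat \<Rightarrow> bool" where
  "width_le P gt w \<longleftrightarrow> (\<forall>A. antichain_in P gt A \<longrightarrow> finite A \<and> card A \<le> w)"

definition minimal_elements :: "'a set \<Rightarrow> ('a \<Rightarrow> 'a \<Rightarrow> bool) \<Rightarrow> 'a set" where
  "minimal_elements P gt = {a \<in> P. \<not> (\<exists>b\<in>P. gt a b)}"

end

theory Submission
  imports Defs
begin

text \<open>Insert the elements one by one in uniformly random order, maintaining the set \<open>M\<close> of
  minima of the elements inserted so far (\<open>|M| \<le> w\<close>). A new element \<open>x\<close> is compared with
  \<open>M\<close> in a fixed order, scanned forwards or backwards with probability \<open>1/2\<close>, stopping as soon as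
  \<open>x\<close> lies above some element of \<open>M\<close>. If \<open>x\<close> is not a minimum of the inserted elements, such an
  element exists and the expected scan length is at most \<open>(|M| + 1) / 2\<close>; otherwise it is
  \<open>|M|\<close>. By backward analysis the \<open>i\<close>-th inserted element is uniform among the first \<open>i\<close>, and
  at most \<open>w\<close> of those are minima, so for \<open>i > w\<close> the \<open>i\<close>-th step costs at most
  \<open>(w + 1) / 2 + w (w - 1) / (2 i)\<close>; summing, \<open>\<Sum>w<i\<le>n. 1 / i \<le> ln (n / w)\<close>.\<close>

primrec qtree_bind :: "'a qtree \<Rightarrow> ('a set \<Rightarrow> 'a qtree) \<Rightarrow> 'a qtree" where
  "qtree_bind (Output S) k = k S"
| "qtree_bind (Query x y f) k = Query x y (\<lambda>a. qtree_bind (f a) k)"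

lemma qresult_qtree_bind: "qresult gt (qtree_bind t k) = qresult gt (k (qresult gt t))"
  by (induction t) auto

lemma qcount_qtree_bind: "qcount gt (qtree_bind t k) = qcount gt t + qcount gt (k (qresult gt t))"
  by (induction t) auto

section \<open>Inserting an element into a set of minima\<close>

text \<open>\<open>scan_insert x M ms K\<close> compares \<open>x\<close> with the elements \<open>ms\<close> of \<open>M\<close> not yet queried; \<open>K\<close>
  collects those already found incomparable to \<open>x\<close>.\<close>

primrec scan_insert :: "'a \<Rightarrow> 'a set \<Rightarrow> 'a list \<Rightarrow> 'a set \<Rightarrow> 'a qtree" where
  "scan_insert x M [] K = Output (insert x K)"
| "scan_insert x M (m # ms) K = Query x m (\<lambda>a. case a of
      Gt \<Rightarrow> Output M
    | Lt \<Rightarrow> scan_insert x M ms K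
    | Inc \<Rightarrow> scan_insert x M ms (insert m K))"

lemma qresult_scan_insert:
  "qresult gt (scan_insert x M ms K) =
    (if \<exists>m\<in>set ms. gt x m then M else insert x (K \<union> {m\<in>set ms. \<not> gt m x}))"
  by (induction ms arbitrary: K) (auto simp: query_answer_def)

lemma qcount_scan_insert_le_length: "qcount gt (scan_insert x M ms K) \<le> length ms"
  by (induction ms arbitrary: K) (auto simp: query_answer_def split: answer.split)

lemma qcount_scan_insert_le_index:
  "i < length ms \<Longrightarrow> gt x (ms ! i) \<Longrightarrow> qcount gt (scan_insert x M ms K) \<le> Suc i"
proof (induction ms arbitrary: K i)
  case Nil
  then show ?case by simp
next
  case (Cons m ms)
  show ?case
  proof (cases i)
    case 0
    then show ?thesis using Cons.prems by (simp add: query_answer_def)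
  next
    case (Suc j)
    then show ?thesis using Cons.prems Cons.IH[of j]
      by (auto simp: query_answer_def split: answer.split)
  qed
qed

definition listing :: "'a set \<Rightarrow> 'a list" where
  "listing M = (SOME xs. set xs = M \<and> distinct xs)"

lemma set_listing_distinct: "finite M \<Longrightarrow> set (listing M) = M \<and> distinct (listing M)"
  unfolding listing_def by (rule someI_ex) (use finite_distinct_list in blast)

lemma length_listing: "finite M \<Longrightarrow> length (listing M) = card M"
  using set_listing_distinct distinct_card by metis

definition insert_minima :: "bool \<Rightarrow> 'a \<Rightarrow> 'a set \<Rightarrow> 'a qtree" where
  "insert_minima d x M = scan_insert x M (if d then listing M else rev (listing M)) {}"

lemma qresult_insert_minima:
  "finite M \<Longrightarrow> qresult gt (insert_minima d x M) =
    (if \<exists>m\<in>M. gt x m then M else insert x {m\<in>M. \<not> gt m x})"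
  using set_listing_distinct[of M] by (auto simp: insert_minima_def qresult_scan_insert)

definition insertion_cost :: "('a \<Rightarrow> 'a \<Rightarrow> bool) \<Rightarrow> 'a \<Rightarrow> 'a set \<Rightarrow> real" where
  "insertion_cost gt x M =
    (real (qcount gt (insert_minima True x M)) + real (qcount gt (insert_minima False x M))) / 2"

lemma insertion_cost_nonneg: "0 \<le> insertion_cost gt x M"
  by (simp add: insertion_cost_def)

lemma insertion_cost_le_card:
  assumes "finite M"
  shows "insertion_cost gt x M \<le> card M"
proof -
  have "qcount gt (insert_minima d x M) \<le> card M" for d
    using qcount_scan_insert_le_length[of gt x M "listing M" "{}"]
      qcount_scan_insert_le_length[of gt x M "rev (listing M)" "{}"] length_listing[OF assms]
    unfolding insert_minima_def by auto
  from this[of True] this[of False] show ?thesis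
    unfolding insertion_cost_def by (simp add: field_simps)
qed

text \<open>If \<open>x\<close> lies above the \<open>i\<close>-th element of the listing, the two scan directions stop after at
  most \<open>i + 1\<close> and \<open>card M - i\<close> queries.\<close>

lemma insertion_cost_le_half_Suc_card:
  assumes "finite M" "m \<in> M" "gt x m"
  shows "insertion_cost gt x M \<le> (real (card M) + 1) / 2"
proof -
  let ?l = "listing M"
  obtain i where i: "i < length ?l" "?l ! i = m"
    using set_listing_distinct[OF assms(1)] assms(2) by (metis in_set_conv_nth)
  have fwd: "qcount gt (insert_minima True x M) \<le> Suc i"
    unfolding insert_minima_def using qcount_scan_insert_le_index[of i ?l] i assms(3) by simp
  have "rev ?l ! (length ?l - Suc i) = m"
    using i by (simp add: rev_nth)
  then have bwd: "qcount gt (insert_minima False x M) \<le> length ?l - i"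
    unfolding insert_minima_def
    using qcount_scan_insert_le_index[of "length ?l - Suc i" "rev ?l"] i assms(3)
    by (simp add: Suc_diff_Suc)
  have "qcount gt (insert_minima True x M) + qcount gt (insert_minima False x M) \<le> card M + 1"
    using fwd bwd i length_listing[OF assms(1)] by linarith
  then show ?thesis
    unfolding insertion_cost_def by (simp add: field_simps)
qed

section \<open>Minimal elements\<close>

lemma poset_on_subset: "poset_on P gt \<Longrightarrow> S \<subseteq> P \<Longrightarrow> poset_on S gt"
  unfolding poset_on_def by (meson subsetD)

lemma antichain_in_mono: "antichain_in S gt A \<Longrightarrow> S \<subseteq> P \<Longrightarrow> antichain_in P gt A"
  unfolding antichain_in_def by (meson order.trans)

lemma width_le_subset: "width_le P gt w \<Longrightarrow> S \<subseteq> P \<Longrightarrow> width_le S gt w"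
  unfolding width_le_def by (meson antichain_in_mono)

lemma card_minimal_elements_le:
  assumes "width_le S gt w"
  shows "card (minimal_elements S gt) \<le> w"
proof -
  have "antichain_in S gt (minimal_elements S gt)"
    unfolding antichain_in_def incomparable_def minimal_elements_def by blast
  then show ?thesis
    using assms unfolding width_le_def by blast
qed

lemma poset_on_irrefl: "poset_on S gt \<Longrightarrow> x \<in> S \<Longrightarrow> \<not> gt x x"
  unfolding poset_on_def by simp

lemma poset_on_trans:
  "poset_on S gt \<Longrightarrow> x \<in> S \<Longrightarrow> y \<in> S \<Longrightarrow> z \<in> S \<Longrightarrow> gt x y \<Longrightarrow> gt y z \<Longrightarrow> gt x z"
  unfolding poset_on_def by meson

lemma exists_minimal_below:
  assumes po: "poset_on S gt" and fin: "finite S" and y: "y \<in> S"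
  shows "\<exists>m\<in>minimal_elements S gt. m = y \<or> gt y m"
  using y
proof (induction "card {z\<in>S. gt y z}" arbitrary: y rule: less_induct)
  case less
  show ?case
  proof (cases "\<exists>z\<in>S. gt y z")
    case False
    then show ?thesis
      using less.prems by (auto simp: minimal_elements_def)
  next
    case True
    then obtain z where z: "z \<in> S" "gt y z" by blast
    have "{z'\<in>S. gt z z'} \<subseteq> {z'\<in>S. gt y z'}"
      using poset_on_trans[OF po less.prems z(1)] z(2) by blast
    moreover have "z \<notin> {z'\<in>S. gt z z'}"
      using poset_on_irrefl[OF po z(1)] by blast
    ultimately have "card {z'\<in>S. gt z z'} < card {z'\<in>S. gt y z'}"
      using fin z by (intro psubset_card_mono) auto
    from less.hyps[OF this z(1)] obtain m
      where m: "m \<in> minimal_elements S gt" "m = z \<or> gt z m" by blast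
    then have "gt y m"
      using z poset_on_trans[OF po less.prems z(1)] unfolding minimal_elements_def by blast
    then show ?thesis using m by blast
  qed
qed

lemma minimal_elements_insert:
  assumes po: "poset_on (insert x T) gt" and fin: "finite T"
  defines "M \<equiv> minimal_elements T gt"
  shows "minimal_elements (insert x T) gt =
    (if \<exists>m\<in>M. gt x m then M else insert x {m\<in>M. \<not> gt m x})"
proof (cases "\<exists>m\<in>M. gt x m")
  case True
  then obtain m0 where m0: "m0 \<in> T" "gt x m0" "\<And>b. b \<in> T \<Longrightarrow> \<not> gt m0 b"
    unfolding M_def minimal_elements_def by blast
  have "\<not> gt m x" if "m \<in> M" for m
  proof
    assume "gt m x"
    with m0 that have "gt m m0"
      using poset_on_trans[OF po] unfolding M_def minimal_elements_def by blast
    with that m0(1) show False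
      unfolding M_def minimal_elements_def by blast
  qed
  then have "minimal_elements (insert x T) gt = M"
    using m0 unfolding M_def minimal_elements_def by blast
  then show ?thesis using True by simp
next
  case False
  have "\<not> gt x y" if "y \<in> T" for y
  proof
    assume "gt x y"
    obtain m where m: "m \<in> M" "m = y \<or> gt y m"
      using exists_minimal_below[OF poset_on_subset[OF po subset_insertI] fin \<open>y \<in> T\<close>]
      unfolding M_def by blast
    then have "m \<in> T" unfolding M_def minimal_elements_def by blast
    with m \<open>gt x y\<close> that have "gt x m"
      using poset_on_trans[OF po] by blast
    with m False show False by blast
  qed
  then have "minimal_elements (insert x T) gt = insert x {m\<in>M. \<not> gt m x}"
    using poset_on_irrefl[OF po] unfolding M_def minimal_elements_def by blast
  then show ?thesis using False by simp
qed

lemma not_minimal_imp_above_minimal_remove: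
  assumes po: "poset_on S gt" and fin: "finite S" and x: "x \<in> S - minimal_elements S gt"
  shows "\<exists>m\<in>minimal_elements (S - {x}) gt. gt x m"
proof -
  obtain y where y: "y \<in> S" "gt x y"
    using x unfolding minimal_elements_def by blast
  then have "y \<in> S - {x}"
    using poset_on_irrefl[OF po] by blast
  then obtain m where m: "m \<in> minimal_elements (S - {x}) gt" "m = y \<or> gt y m"
    using exists_minimal_below[OF poset_on_subset[OF po Diff_subset] finite_Diff[OF fin]] by blast
  then have "gt x m"
    using y x poset_on_trans[OF po] unfolding minimal_elements_def by blast
  with m show ?thesis by blast
qed

text \<open>Drawing the element inserted last uniformly and recursing on the rest realises a uniformly
  random insertion order.\<close>

primrec minima_alg :: "nat \<Rightarrow> 'a set \<Rightarrow> 'a rand_qalg" where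
  "minima_alg 0 S = return_pmf (Output {})"
| "minima_alg (Suc k) S =
    pmf_of_set S \<bind> (\<lambda>x. minima_alg k (S - {x}) \<bind> (\<lambda>t.
    pmf_of_set {True, False} \<bind> (\<lambda>d. return_pmf (qtree_bind t (insert_minima d x)))))"

lemma set_pmf_minima_alg_Suc:
  assumes "finite S" "S \<noteq> {}" "t \<in> set_pmf (minima_alg (Suc k) S)"
  obtains x t' d where "x \<in> S" "t' \<in> set_pmf (minima_alg k (S - {x}))"
    "t = qtree_bind t' (insert_minima d x)"
  using assms by (auto simp: set_bind_pmf)

lemma qresult_minima_alg:
  assumes "poset_on S gt" "card S = k" "finite S" "t \<in> set_pmf (minima_alg k S)"
  shows "qresult gt t = minimal_elements S gt"
  using assms
proof (induction k arbitrary: S t)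
  case 0
  then show ?case by (simp add: minimal_elements_def)
next
  case (Suc k)
  then have "S \<noteq> {}" by auto
  with Suc.prems obtain x t' d where x: "x \<in> S" and t': "t' \<in> set_pmf (minima_alg k (S - {x}))"
    and t: "t = qtree_bind t' (insert_minima d x)"
    by (auto elim: set_pmf_minima_alg_Suc)
  let ?M = "minimal_elements (S - {x}) gt"
  have "qresult gt t' = ?M"
    using Suc.IH[OF _ _ _ t'] Suc.prems x by (auto intro: poset_on_subset)
  moreover have "finite ?M"
    using Suc.prems(3) by (simp add: minimal_elements_def)
  moreover have "insert x (S - {x}) = S"
    using x by blast
  ultimately show ?case
    using minimal_elements_insert[of x "S - {x}" gt] Suc.prems
    by (simp add: t qresult_qtree_bind qresult_insert_minima)
qed

section \<open>Expected number of queries\<close>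

text \<open>Bound on the expected cost of the \<open>i\<close>-th insertion, by backward analysis: the element
  inserted last is uniform among \<open>i\<close> elements, at most \<open>w\<close> of which are minimal and cost at most
  \<open>min (i - 1) w\<close>, while the others cost at most \<open>(w + 1) / 2\<close> on average.\<close>

definition step_bound :: "nat \<Rightarrow> nat \<Rightarrow> real" where
  "step_bound w i =
    (if i \<le> w then real i - 1 else (real w + 1) / 2 + real w * (real w - 1) / (2 * real i))"

definition cost_bound :: "nat \<Rightarrow> nat \<Rightarrow> real" where
  "cost_bound w k = (\<Sum>i=1..k. step_bound w i)"

lemma cost_bound_0 [simp]: "cost_bound w 0 = 0"
  by (simp add: cost_bound_def)

lemma cost_bound_Suc: "cost_bound w (Suc k) = cost_bound w k + step_bound w (Suc k)"
  by (simp add: cost_bound_def)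

lemma step_bound_nonneg: "1 \<le> i \<Longrightarrow> 0 \<le> step_bound w i"
  by (cases w) (auto simp: step_bound_def)

lemma cost_bound_nonneg: "0 \<le> cost_bound w k"
  unfolding cost_bound_def by (intro sum_nonneg) (simp add: step_bound_nonneg)

lemma sum_le_step_bound:
  fixes c :: "'a \<Rightarrow> real"
  assumes fin: "finite S" and card_S: "card S = i" and "1 \<le> i"
    and M: "M \<subseteq> S" "card M \<le> w"
    and le_i: "\<And>x. x \<in> S \<Longrightarrow> c x \<le> real i - 1"
    and le_w: "\<And>x. x \<in> S \<Longrightarrow> c x \<le> real w"
    and le_half: "\<And>x. x \<in> S - M \<Longrightarrow> c x \<le> (real w + 1) / 2"
  shows "sum c S \<le> real i * step_bound w i"
proof (cases "i \<le> w")
  case True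
  have "sum c S \<le> real (card S) * (real i - 1)"
    using le_i by (intro sum_bounded_above) auto
  then show ?thesis
    using True card_S by (simp add: step_bound_def)
next
  case False
  have finM: "finite M" using M(1) fin by (rule finite_subset)
  have "sum c S = sum c (S - M) + sum c M"
    using sum.subset_diff[OF M(1) fin] .
  also have "\<dots> \<le> real (card (S - M)) * ((real w + 1) / 2) + real (card M) * real w"
    using le_half le_w M(1) by (intro add_mono sum_bounded_above) auto
  also have "real (card (S - M)) = real i - real (card M)"
    using card_Diff_subset[OF finM M(1)] card_mono[OF fin M(1)] card_S by simp
  also have "(real i - real (card M)) * ((real w + 1) / 2) + real (card M) * real w
      = real i * ((real w + 1) / 2) + real (card M) * ((real w - 1) / 2)"
    by (simp add: field_simps)
  also have "\<dots> \<le> real i * ((real w + 1) / 2) + real w * ((real w - 1) / 2)"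
    using M(2) by (cases "w = 0") (auto intro!: mult_right_mono)
  also have "\<dots> = real i * step_bound w i"
    using False \<open>1 \<le> i\<close> by (simp add: step_bound_def field_simps)
  finally show ?thesis .
qed

lemma sum_insertion_cost_le:
  assumes po: "poset_on S gt" and wd: "width_le S gt w" and card_S: "card S = i" and "1 \<le> i"
  shows "(\<Sum>x\<in>S. insertion_cost gt x (minimal_elements (S - {x}) gt)) \<le> real i * step_bound w i"
proof (rule sum_le_step_bound[OF _ card_S \<open>1 \<le> i\<close>])
  show fin: "finite S"
    using card_S \<open>1 \<le> i\<close> by (auto intro: card_ge_0_finite)
  show "minimal_elements S gt \<subseteq> S" "card (minimal_elements S gt) \<le> w"
    using card_minimal_elements_le[OF wd] by (auto simp: minimal_elements_def)
  fix x assume x: "x \<in> S"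
  let ?M = "minimal_elements (S - {x}) gt"
  have finM: "finite ?M"
    using fin by (simp add: minimal_elements_def)
  have "card ?M \<le> card (S - {x})"
    using fin by (intro card_mono) (auto simp: minimal_elements_def)
  then have "real (card ?M) \<le> real (i - 1)"
    using x card_S fin by simp
  then show "insertion_cost gt x ?M \<le> real i - 1"
    using insertion_cost_le_card[OF finM, of gt x] \<open>1 \<le> i\<close> by (simp add: of_nat_diff)
  have "card ?M \<le> w"
    using card_minimal_elements_le[OF width_le_subset[OF wd Diff_subset]] .
  then show "insertion_cost gt x ?M \<le> real w"
    using insertion_cost_le_card[OF finM, of gt x] by simp
next
  fix x assume x: "x \<in> S - minimal_elements S gt"
  let ?M = "minimal_elements (S - {x}) gt"
  have finS: "finite S"
    using card_S \<open>1 \<le> i\<close> by (auto intro: card_ge_0_finite)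
  then obtain m where "m \<in> ?M" "gt x m"
    using not_minimal_imp_above_minimal_remove[OF po _ x] by blast
  moreover have "finite ?M"
    using finS by (simp add: minimal_elements_def)
  ultimately have "insertion_cost gt x ?M \<le> (real (card ?M) + 1) / 2"
    by (intro insertion_cost_le_half_Suc_card)
  also have "\<dots> \<le> (real w + 1) / 2"
    using card_minimal_elements_le[OF width_le_subset[OF wd Diff_subset]] by simp
  finally show "insertion_cost gt x ?M \<le> (real w + 1) / 2" .
qed

lemma nn_integral_qcount_insert_minima:
  assumes po: "poset_on S gt" and card_S: "card S = Suc k" and x: "x \<in> S"
  shows "(\<integral>\<^sup>+t. (\<integral>\<^sup>+d. ennreal (real (qcount gt (qtree_bind t (insert_minima d x))))
            \<partial>measure_pmf (pmf_of_set {True, False})) \<partial>measure_pmf (minima_alg k (S - {x})))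
    = (\<integral>\<^sup>+t. ennreal (real (qcount gt t)) \<partial>measure_pmf (minima_alg k (S - {x})))
      + ennreal (insertion_cost gt x (minimal_elements (S - {x}) gt))"
proof -
  let ?M = "minimal_elements (S - {x}) gt"
  have fin: "finite S"
    using card_S by (simp add: card_ge_0_finite)
  have "(\<integral>\<^sup>+d. ennreal (real (qcount gt (qtree_bind t (insert_minima d x))))
          \<partial>measure_pmf (pmf_of_set {True, False}))
        = ennreal (real (qcount gt t)) + ennreal (insertion_cost gt x ?M)"
    if t: "t \<in> set_pmf (minima_alg k (S - {x}))" for t
  proof -
    have "qresult gt t = ?M"
      using qresult_minima_alg[OF poset_on_subset[OF po Diff_subset] _ _ t] card_S fin x by simp
    then have "(\<integral>\<^sup>+d. ennreal (real (qcount gt (qtree_bind t (insert_minima d x))))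
          \<partial>measure_pmf (pmf_of_set {True, False}))
        = ennreal (real (qcount gt t) + insertion_cost gt x ?M)"
      by (simp add: nn_integral_pmf_of_set qcount_qtree_bind insertion_cost_def field_simps
          ennreal_divide_numeral flip: ennreal_plus)
    then show ?thesis
      by (simp add: ennreal_plus insertion_cost_nonneg)
  qed
  then have "(\<integral>\<^sup>+t. (\<integral>\<^sup>+d. ennreal (real (qcount gt (qtree_bind t (insert_minima d x))))
            \<partial>measure_pmf (pmf_of_set {True, False})) \<partial>measure_pmf (minima_alg k (S - {x})))
    = (\<integral>\<^sup>+t. ennreal (real (qcount gt t)) + ennreal (insertion_cost gt x ?M)
            \<partial>measure_pmf (minima_alg k (S - {x})))"
    by (intro nn_integral_cong_AE) (simp add: AE_measure_pmf_iff)
  also have "\<dots> = (\<integral>\<^sup>+t. ennreal (real (qcount gt t)) \<partial>measure_pmf (minima_alg k (S - {x})))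
      + ennreal (insertion_cost gt x ?M)"
    by (subst nn_integral_add) (auto simp: measure_pmf.emeasure_space_1)
  finally show ?thesis .
qed

lemma nn_integral_qcount_minima_alg_Suc:
  assumes po: "poset_on S gt" and card_S: "card S = Suc k"
  shows "(\<integral>\<^sup>+t. ennreal (real (qcount gt t)) \<partial>measure_pmf (minima_alg (Suc k) S))
    = (\<Sum>x\<in>S. (\<integral>\<^sup>+t. ennreal (real (qcount gt t)) \<partial>measure_pmf (minima_alg k (S - {x})))
         + ennreal (insertion_cost gt x (minimal_elements (S - {x}) gt))) / of_nat (Suc k)"
proof -
  have "finite S" "S \<noteq> {}"
    using card_S by (auto simp: card_ge_0_finite)
  then show ?thesis
    using nn_integral_qcount_insert_minima[OF po card_S] card_S
    by (simp add: nn_integral_pmf_of_set)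
qed

lemma nn_integral_qcount_minima_alg_le:
  assumes "poset_on S gt" "width_le S gt w" "card S = k"
  shows "(\<integral>\<^sup>+t. ennreal (real (qcount gt t)) \<partial>measure_pmf (minima_alg k S)) \<le> ennreal (cost_bound w k)"
  using assms
proof (induction k arbitrary: S)
  case 0
  then show ?case by simp
next
  case (Suc k)
  let ?c = "\<lambda>x. insertion_cost gt x (minimal_elements (S - {x}) gt)"
  have IH: "(\<integral>\<^sup>+t. ennreal (real (qcount gt t)) \<partial>measure_pmf (minima_alg k (S - {x})))
      \<le> ennreal (cost_bound w k)" if "x \<in> S" for x
    using Suc.IH[of "S - {x}"] Suc.prems that
    by (simp add: poset_on_subset width_le_subset card_ge_0_finite)
  have "(\<integral>\<^sup>+t. ennreal (real (qcount gt t)) \<partial>measure_pmf (minima_alg (Suc k) S))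
      \<le> (\<Sum>x\<in>S. ennreal (cost_bound w k) + ennreal (?c x)) / of_nat (Suc k)"
    unfolding nn_integral_qcount_minima_alg_Suc[OF Suc.prems(1,3)]
    by (intro divide_right_mono_ennreal sum_mono add_right_mono IH)
  also have "\<dots> = ennreal (\<Sum>x\<in>S. cost_bound w k + ?c x) / ennreal (real (Suc k))"
    by (simp add: cost_bound_nonneg insertion_cost_nonneg ennreal_of_nat_eq_real_of_nat
        flip: ennreal_plus)
  also have "\<dots> = ennreal ((\<Sum>x\<in>S. cost_bound w k + ?c x) / real (Suc k))"
    by (intro divide_ennreal sum_nonneg add_nonneg_nonneg cost_bound_nonneg insertion_cost_nonneg)
      simp
  also have "\<dots> \<le> ennreal (cost_bound w (Suc k))"
  proof (rule ennreal_leI)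
    have "(\<Sum>x\<in>S. cost_bound w k + ?c x) \<le> real (Suc k) * cost_bound w k + real (Suc k) * step_bound w (Suc k)"
      using sum_insertion_cost_le[OF Suc.prems(1,2,3)] Suc.prems(3) by (simp add: sum.distrib)
    then show "(\<Sum>x\<in>S. cost_bound w k + ?c x) / real (Suc k) \<le> cost_bound w (Suc k)"
      by (simp add: cost_bound_Suc divide_le_eq field_simps)
  qed
  finally show ?case .
qed

section \<open>Solving the recurrence\<close>

lemma cost_bound_le_width: "m \<le> w \<Longrightarrow> cost_bound w m = real m * (real m - 1) / 2"
  by (induction m) (simp_all add: cost_bound_Suc step_bound_def field_simps)

lemma inverse_Suc_le_ln_diff:
  fixes x :: real
  assumes "0 < x"
  shows "1 / (x + 1) \<le> ln (x + 1) - ln x"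
proof -
  have "ln (x / (x + 1)) \<le> x / (x + 1) - 1"
    using assms by (intro ln_le_minus_one) auto
  also have "\<dots> = - (1 / (x + 1))"
    using assms by (simp add: field_simps)
  finally show ?thesis
    using assms by (simp add: ln_div)
qed

lemma cost_bound_le_ln:
  assumes "1 \<le> w" "w \<le> n"
  shows "cost_bound w n
    \<le> (real w + 1) / 2 * real n - real w + real w * (real w - 1) / 2 * (ln (real n) - ln (real w))"
  using assms(2)
proof (induction n rule: dec_induct)
  case base
  then show ?case by (simp add: cost_bound_le_width field_simps)
next
  case (step n)
  define c where "c = real w * (real w - 1) / 2"
  have "1 / (real n + 1) \<le> ln (real n + 1) - ln (real n)"
    using step assms(1) by (intro inverse_Suc_le_ln_diff) simp
  moreover have "0 \<le> c"
    using assms(1) by (simp add: c_def)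
  ultimately have "c * (1 / (real n + 1)) \<le> c * (ln (real n + 1) - ln (real n))"
    by (rule mult_left_mono)
  then have "c * (1 / (real n + 1)) \<le> c * ln (real n + 1) - c * ln (real n)"
    by (simp only: right_diff_distrib)
  moreover have "step_bound w (Suc n) = (real w + 1) / 2 + c * (1 / (real n + 1))"
    using step by (simp add: step_bound_def c_def field_simps)
  moreover have "cost_bound w n \<le> (real w + 1) / 2 * real n - real w + (c * ln (real n) - c * ln (real w))"
    using step.IH by (simp add: c_def right_diff_distrib)
  moreover have "(real w + 1) / 2 * (real n + 1) = (real w + 1) / 2 * real n + (real w + 1) / 2"
    by (simp add: distrib_left)
  ultimately have "cost_bound w (Suc n)
      \<le> (real w + 1) / 2 * (real n + 1) - real w + (c * ln (real n + 1) - c * ln (real w))"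
    unfolding cost_bound_Suc by linarith
  then show ?case
    by (simp add: c_def right_diff_distrib add.commute)
qed

lemma cost_bound_le_log:
  assumes "1 \<le> w" "w \<le> n"
  shows "cost_bound w n
    \<le> (real w + 1) / 2 * real n + (real w ^ 2 - real w) / 2 * (log 2 (real n) - log 2 (real w))"
proof -
  have "0 \<le> ln (real n) - ln (real w)"
    using assms by simp
  then have "ln (real n) - ln (real w) \<le> (ln (real n) - ln (real w)) / ln 2"
    using ln_2_less_1 by (simp add: le_divide_eq mult_left_le)
  also have "\<dots> = log 2 (real n) - log 2 (real w)"
    by (simp add: log_def diff_divide_distrib)
  finally have log_bound: "real w * (real w - 1) / 2 * (ln (real n) - ln (real w))
      \<le> real w * (real w - 1) / 2 * (log 2 (real n) - log 2 (real w))"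
    using assms(1) by (intro mult_left_mono) auto
  have coeff: "(real w ^ 2 - real w) / 2 = real w * (real w - 1) / 2"
    by (simp add: power2_eq_square algebra_simps)
  show ?thesis
    unfolding coeff using cost_bound_le_ln[OF assms] log_bound of_nat_0_le_iff[of w] by linarith
qed

theorem theorem8:
  fixes P :: "'a set" and w :: nat
  assumes "finite P" and "1 \<le> w" and "w \<le> card P"
  shows "\<exists>A :: 'a rand_qalg.
    \<forall>gt. poset_on P gt \<and> width_le P gt w \<longrightarrow>
      (\<forall>t\<in>set_pmf A. qresult gt t = minimal_elements P gt) \<and>
      (\<integral>\<^sup>+ t. ennreal (real (qcount gt t)) \<partial>(measure_pmf A))
        \<le> ennreal ((real w + 1) / 2 * real (card P)
             + (real w ^ 2 - real w) / 2 * (log 2 (real (card P)) - log 2 (real w)))"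
proof -
  let ?A = "minima_alg (card P) P"
  let ?B = "(real w + 1) / 2 * real (card P)
    + (real w ^ 2 - real w) / 2 * (log 2 (real (card P)) - log 2 (real w))"
  have "(\<forall>t\<in>set_pmf ?A. qresult gt t = minimal_elements P gt) \<and>
      (\<integral>\<^sup>+ t. ennreal (real (qcount gt t)) \<partial>(measure_pmf ?A)) \<le> ennreal ?B"
    if po: "poset_on P gt" and wd: "width_le P gt w" for gt
  proof
    show "\<forall>t\<in>set_pmf ?A. qresult gt t = minimal_elements P gt"
      using qresult_minima_alg[OF po refl assms(1)] by blast
    have "(\<integral>\<^sup>+ t. ennreal (real (qcount gt t)) \<partial>(measure_pmf ?A)) \<le> ennreal (cost_bound w (card P))"
      by (rule nn_integral_qcount_minima_alg_le[OF po wd refl])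
    also have "\<dots> \<le> ennreal ?B"
      using cost_bound_le_log[OF assms(2,3)] by (rule ennreal_leI)
    finally show "(\<integral>\<^sup>+ t. ennreal (real (qcount gt t)) \<partial>(measure_pmf ?A)) \<le> ennreal ?B" .
  qed
  then show ?thesis by blast
qed

end
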